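(* For every integer $n\ge 2$, $d_{n+1}+1 < (d_n+1)^2$.
   Context: A delta-matroid $(E,\mathcal F)$ consists of a finite ground set $E$ and a non-empty collection $\mathcal F$ of subsets of $E$ (the feasible sets) satisfying the symmetric exchange axiom: for all $X,Y\in\mathcal F$ and every $e\in X\triangle Y$ there exists $f\in X\triangle Y$ (possibly $f=e$) with $X\triangle\{e,f\}\in\mathcal F$. Let $d_n$ denote the number of labelled delta-matroids with ground set $[n]=\{1,\dots,n\}$, i.e. the number of collections $\mathcal F$ of subsets of $[n]$ such that $([n],\mathcal F)$ is a delta-matroid. *)

theory Defs
  imports Main
begin

definition symdiff :: "'a set \<Rightarrow> 'a set \<Rightarrow> 'a set" where
  "symdiff X Y = (X - Y) \<union> (Y - X)"

definition delta_matroid :: "'a set \<Rightarrow> 'a set set \<Rightarrow> bool" where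
  "delta_matroid E F \<longleftrightarrow> finite E \<and> F \<noteq> {} \<and> (\<forall>X\<in>F. X \<subseteq> E) \<and>
     (\<forall>X\<in>F. \<forall>Y\<in>F. \<forall>e\<in>symdiff X Y. \<exists>f\<in>symdiff X Y. symdiff X {e, f} \<in> F)"

definition num_delta_matroids :: "nat \<Rightarrow> nat" where
  "num_delta_matroids n = card {F. F \<subseteq> Pow {1..n} \<and> delta_matroid {1..n} F}"

end

theory Submission
  imports Defs
begin

text \<open>Splitting a delta-matroid on \<open>[n+1]\<close> into its deletion and contraction at \<open>n+1\<close> is injective,
and each part is a delta-matroid on \<open>[n]\<close> or empty. So there are at most \<open>(d\<^sub>n + 1)\<^sup>2\<close> possible
pairs. Two of them never occur: \<open>(\<emptyset>, \<emptyset>)\<close>, because feasible families are non-empty, and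
\<open>({\<emptyset>}, {{1,2}})\<close>, because the exchange axiom applied to \<open>\<emptyset>\<close> and \<open>{1,2,n+1}\<close> at \<open>1\<close> would need
one of \<open>{1}\<close>, \<open>{1,2}\<close> or \<open>{1,n+1}\<close> to be feasible.\<close>

definition delta_matroids :: "'a set \<Rightarrow> 'a set set set" where
  "delta_matroids E = {F. F \<subseteq> Pow E \<and> delta_matroid E F}"

definition deletion :: "'a set set \<Rightarrow> 'a \<Rightarrow> 'a set set" where
  "deletion F e = {X \<in> F. e \<notin> X}"

definition contraction :: "'a set set \<Rightarrow> 'a \<Rightarrow> 'a set set" where
  "contraction F e = (\<lambda>X. X - {e}) ` {X \<in> F. e \<in> X}"

lemma symdiff_iff: "x \<in> symdiff A B \<longleftrightarrow> (x \<in> A) \<noteq> (x \<in> B)"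
  unfolding symdiff_def by auto

lemma delta_matroid_exchange:
  assumes "delta_matroid E F" "X \<in> F" "Y \<in> F" "e \<in> symdiff X Y"
  obtains f where "f \<in> symdiff X Y" "symdiff X {e, f} \<in> F"
  using assms unfolding delta_matroid_def by blast

lemma delta_matroid_singleton:
  assumes "finite E" "X \<subseteq> E"
  shows "delta_matroid E {X}"
  using assms unfolding delta_matroid_def symdiff_def by auto

lemma delta_matroids_iff: "F \<in> delta_matroids E \<longleftrightarrow> delta_matroid E F"
  unfolding delta_matroids_def delta_matroid_def by blast

lemma finite_delta_matroids: "finite E \<Longrightarrow> finite (delta_matroids E)"
  unfolding delta_matroids_def by (rule finite_subset[of _ "Pow (Pow E)"]) auto

lemma empty_notin_delta_matroids: "{} \<notin> delta_matroids E"
  unfolding delta_matroids_def delta_matroid_def by auto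

lemma deletion_delta_matroid:
  assumes dm: "delta_matroid E F" and ne: "deletion F e \<noteq> {}"
  shows "delta_matroid (E - {e}) (deletion F e)"
  unfolding delta_matroid_def
proof (intro conjI ballI)
  fix X Y d assume X: "X \<in> deletion F e" and Y: "Y \<in> deletion F e" and d: "d \<in> symdiff X Y"
  then obtain f where f: "f \<in> symdiff X Y" "symdiff X {d, f} \<in> F"
    using delta_matroid_exchange[OF dm] unfolding deletion_def by blast
  have "e \<notin> symdiff X {d, f}"
    using X Y d f(1) unfolding deletion_def by (auto simp: symdiff_iff)
  with f show "\<exists>f\<in>symdiff X Y. symdiff X {d, f} \<in> deletion F e"
    unfolding deletion_def by blast
qed (use dm ne in \<open>auto simp: delta_matroid_def deletion_def\<close>)

lemma contraction_delta_matroid: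
  assumes dm: "delta_matroid E F" and ne: "contraction F e \<noteq> {}"
  shows "delta_matroid (E - {e}) (contraction F e)"
  unfolding delta_matroid_def
proof (intro conjI ballI)
  fix X' Y' d assume X': "X' \<in> contraction F e" and Y': "Y' \<in> contraction F e"
    and d: "d \<in> symdiff X' Y'"
  obtain X where X: "X \<in> F" "e \<in> X" "X' = X - {e}" using X' unfolding contraction_def by blast
  obtain Y where Y: "Y \<in> F" "e \<in> Y" "Y' = Y - {e}" using Y' unfolding contraction_def by blast
  have sd: "symdiff X' Y' = symdiff X Y" using X Y by (auto simp: symdiff_def)
  obtain f where f: "f \<in> symdiff X Y" "symdiff X {d, f} \<in> F"
    using delta_matroid_exchange[OF dm X(1) Y(1)] d sd by auto
  have "d \<noteq> e" "f \<noteq> e" using d f(1) sd X(2) Y(2) by (auto simp: symdiff_iff)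
  then have "e \<in> symdiff X {d, f}" "symdiff X {d, f} - {e} = symdiff X' {d, f}"
    using X by (auto simp: symdiff_def)
  with f(2) have "symdiff X' {d, f} \<in> contraction F e"
    unfolding contraction_def by (metis (mono_tags, lifting) image_eqI mem_Collect_eq)
  with f(1) sd show "\<exists>f\<in>symdiff X' Y'. symdiff X' {d, f} \<in> contraction F e" by auto
qed (use dm ne in \<open>auto simp: delta_matroid_def contraction_def\<close>)

lemma deletion_union_contraction:
  "F = deletion F e \<union> insert e ` contraction F e"
proof -
  have "insert e ` (\<lambda>X. X - {e}) ` {X \<in> F. e \<in> X} = {X \<in> F. e \<in> X}"
    by (force simp: image_image insert_absorb)
  then show ?thesis unfolding deletion_def contraction_def by blast
qed

lemma inj_deletion_contraction: "inj (\<lambda>F. (deletion F e, contraction F e))"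
proof (rule injI)
  fix F G assume eq: "(deletion F e, contraction F e) = (deletion G e, contraction G e)"
  have "F = deletion F e \<union> insert e ` contraction F e" by (rule deletion_union_contraction)
  also have "\<dots> = deletion G e \<union> insert e ` contraction G e" using eq by simp
  also have "\<dots> = G" by (rule deletion_union_contraction[symmetric])
  finally show "F = G" .
qed

lemma deletion_or_contraction_nonempty:
  assumes "delta_matroid E F"
  shows "deletion F e \<noteq> {} \<or> contraction F e \<noteq> {}"
proof -
  have "F \<noteq> {}" using assms unfolding delta_matroid_def by simp
  then show ?thesis unfolding deletion_def contraction_def by blast
qed

lemma deletion_contraction_not_pair:
  assumes dm: "delta_matroid E F" and "a \<noteq> e" "a \<noteq> b"
    and del: "deletion F e = {{}}"
  shows "contraction F e \<noteq> {{a, b}}"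
proof
  assume con: "contraction F e = {{a, b}}"
  have empty: "{} \<in> F" using del unfolding deletion_def by blast
  have "{a, b} \<in> contraction F e" using con by simp
  then obtain Y where Y: "Y \<in> F" "{a, b} = Y - {e}" unfolding contraction_def by blast
  have "a \<in> symdiff {} Y" using Y(2) by (auto simp: symdiff_iff)
  then obtain f where f: "symdiff {} {a, f} \<in> F"
    using delta_matroid_exchange[OF dm empty Y(1)] by blast
  then have af: "{a, f} \<in> F" by (simp add: symdiff_def)
  show False
  proof (cases "f = e")
    case True
    then have "{a, e} - {e} \<in> contraction F e" using af unfolding contraction_def by blast
    moreover have "{a, e} - {e} = {a}" using \<open>a \<noteq> e\<close> by auto
    ultimately have "{a} = {a, b}" using con by simp
    with \<open>a \<noteq> b\<close> show False by (metis insertI1 insert_commute singletonD)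
  next
    case False
    then have "{a, f} \<in> deletion F e" using af \<open>a \<noteq> e\<close> unfolding deletion_def by simp
    with del show False by simp
  qed
qed

theorem card_delta_matroids_insert:
  assumes "finite E" "e \<notin> E" "a \<in> E" "b \<in> E" "a \<noteq> b"
  shows "card (delta_matroids (insert e E)) + 2 \<le> (card (delta_matroids E) + 1) ^ 2"
proof -
  let ?A = "insert {} (delta_matroids E)"
  let ?excluded = "{({}, {}), ({{}}, {{a, b}})}"
  let ?split = "\<lambda>F. (deletion F e, contraction F e)"
  have finA: "finite ?A" using finite_delta_matroids[OF assms(1)] by simp
  have cardA: "card ?A = card (delta_matroids E) + 1"
    using finite_delta_matroids[OF assms(1)] empty_notin_delta_matroids[of E] by simp
  have "{{}} \<in> delta_matroids E"
    by (simp add: delta_matroids_iff delta_matroid_singleton assms(1))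
  moreover have "{{a, b}} \<in> delta_matroids E"
    by (simp add: delta_matroids_iff delta_matroid_singleton assms(1,3,4))
  ultimately have excluded_sub: "?excluded \<subseteq> ?A \<times> ?A" by blast
  have split_in: "?split ` delta_matroids (insert e E) \<subseteq> ?A \<times> ?A - ?excluded"
  proof clarify
    fix F assume "F \<in> delta_matroids (insert e E)"
    then have dm: "delta_matroid (insert e E) F" by (simp add: delta_matroids_iff)
    have E: "insert e E - {e} = E" using assms(2) by simp
    have "deletion F e \<in> ?A"
      using deletion_delta_matroid[OF dm, of e] unfolding E delta_matroids_iff[symmetric] by blast
    moreover have "contraction F e \<in> ?A"
      using contraction_delta_matroid[OF dm, of e] unfolding E delta_matroids_iff[symmetric] by blast
    moreover have "?split F \<noteq> ({}, {})"
      using deletion_or_contraction_nonempty[OF dm] by simp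
    moreover have "?split F \<noteq> ({{}}, {{a, b}})"
      using deletion_contraction_not_pair[OF dm, of a e b] assms(2,3,5) by blast
    ultimately show "?split F \<in> ?A \<times> ?A - ?excluded" by blast
  qed
  have card_square: "card (?A \<times> ?A) = (card (delta_matroids E) + 1) ^ 2"
    by (simp only: card_cartesian_product cardA power2_eq_square)
  have "card ?excluded = 2" by simp
  with card_square card_mono[OF finite_cartesian_product[OF finA finA] excluded_sub]
    card_Diff_subset[OF _ excluded_sub]
  have "card (?A \<times> ?A - ?excluded) + 2 = (card (delta_matroids E) + 1) ^ 2" by simp
  moreover have "card (delta_matroids (insert e E)) \<le> card (?A \<times> ?A - ?excluded)"
    using card_inj_on_le[OF inj_on_subset[OF inj_deletion_contraction] split_in] finA by blast
  ultimately show ?thesis by linarith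
qed

theorem mainTheorem8:
  fixes n :: nat
  assumes "n \<ge> 2"
  shows "num_delta_matroids (n + 1) + 1 < (num_delta_matroids n + 1) ^ 2"
proof -
  have "{1..n + 1} = insert (Suc n) {1..n}" by auto
  moreover have "card (delta_matroids (insert (Suc n) {1..n})) + 2
      \<le> (card (delta_matroids {1..n}) + 1) ^ 2"
    using assms by (intro card_delta_matroids_insert[of _ _ 1 2]) auto
  ultimately show ?thesis
    unfolding num_delta_matroids_def delta_matroids_def[symmetric] by simp
qed

end
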